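(* For every $\gamma>0$, $n\ge1$ and $p\ge1$, $$\frac{1}{n^\gamma}\max_{1\le k\le n}\|\mathbb{E}_0(S_k)\|_p\le c_\gamma\sum_{k\ge n+1}\frac{1}{k^{\gamma+1}}\|\mathbb{E}_0(S_k)\|_p,$$ where $c_\gamma=3\times2^{2\gamma+1}(2^{\gamma+1}+1)$.
   Context: Let $(\Omega,\mathcal{F},\mathbb{P})$ be a probability space and let $T:\Omega\to\Omega$ be a bijective, bimeasurable, measure-preserving transformation. Let $\mathcal{F}_0\subseteq\mathcal{F}$ be a $\sigma$-algebra with $\mathcal{F}_0\subseteq T^{-1}(\mathcal{F}_0)$, and set $\mathcal{F}_i=T^{-i}(\mathcal{F}_0)$ for $i\in\mathbb{Z}$. Let $X_0$ be $\mathcal{F}_0$-measurable with $\mathbb{E}X_0=0$ and $\mathbb{E}X_0^2<\infty$. Put $X_i=X_0\circ T^i$ and $S_n=\sum_{i=0}^{n-1}X_i$. Write $\mathbb{E}_0(\cdot)=\mathbb{E}(\cdot\mid\mathcal{F}_0)$ and let $\|\cdot\|_p$ be the $\mathbb{L}^p$ norm (possibly infinite). *)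

theory Defs
  imports "HOL-Probability.Probability"
begin

definition lp_norm :: "'a measure \<Rightarrow> real \<Rightarrow> ('a \<Rightarrow> real) \<Rightarrow> ennreal" where
  "lp_norm M p f =
     (let I = (\<integral>\<^sup>+ x. ennreal (\<bar>f x\<bar> powr p) \<partial>M)
      in if I = \<infinity> then \<infinity> else ennreal (enn2real I powr (1 / p)))"

definition partial_sum :: "('a \<Rightarrow> 'a) \<Rightarrow> ('a \<Rightarrow> real) \<Rightarrow> nat \<Rightarrow> 'a \<Rightarrow> real" where
  "partial_sum T X0 n = (\<lambda>\<omega>. \<Sum>i<n. X0 ((T ^^ i) \<omega>))"

end

theory Submission
  imports Defs
begin

text \<open>Put a(k) = ||E_0(S_k)||_p. Since S_(k+j) = S_k + S_j o T^k and every F_0-set is a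
  T^k-preimage of an F_0-set, E_0(S_j o T^k) = E_0(E_0(S_j) o T^k), whose L^p norm is at most a(j)
  by conditional Jensen and invariance of the measure. With a crude quasi-triangle inequality
  (constant 4 instead of Minkowski's 1) this gives a(k) <= 4 (a(k+j) + a(j)). Averaging over
  j in [n+1, 3n] bounds a(k), k <= n, by 4/n times the sum of the a(i) with i in [n+1, 4n], where
  the weight i^-(gamma+1) is at least (4n)^-(gamma+1); the resulting constant 16 * 4^gamma is
  below c_gamma.\<close>

lemma convex_on_abs_powr:
  fixes p :: real
  assumes p: "p \<ge> 1"
  shows "convex_on UNIV (\<lambda>x::real. \<bar>x\<bar> powr p)"
proof (rule convex_onI)
  fix t x y :: real
  assume t: "0 < t" "t < 1"
  have scale: "(s * c) powr p \<le> s * c powr p" if "c \<ge> 0" "0 \<le> s" "s \<le> 1" for s c :: real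
  proof -
    have "(s * c) powr p = s powr p * c powr p" using that by (simp add: powr_mult)
    also have "\<dots> \<le> s powr 1 * c powr p"
      by (rule mult_right_mono, rule powr_mono') (use that p in auto)
    finally show ?thesis using that by simp
  qed
  have convex_nonneg: "((1 - t) * a + t * b) powr p \<le> (1 - t) * a powr p + t * b powr p"
    if "a \<ge> 0" "b \<ge> 0" for a b :: real
  proof (cases "a = 0 \<or> b = 0")
    case True
    then show ?thesis using scale[of b t] scale[of a "1 - t"] that t by auto
  next
    case False
    then show ?thesis using convex_onD[OF powr_convex[OF p], of t a b] that t by auto
  qed
  have "\<bar>(1 - t) *\<^sub>R x + t *\<^sub>R y\<bar> powr p \<le> ((1 - t) * \<bar>x\<bar> + t * \<bar>y\<bar>) powr p"
    by (rule powr_mono2)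
       (use t p in \<open>auto simp: abs_mult intro!: order_trans[OF abs_triangle_ineq]\<close>)
  also have "\<dots> \<le> (1 - t) * \<bar>x\<bar> powr p + t * \<bar>y\<bar> powr p"
    by (rule convex_nonneg) auto
  finally show "\<bar>(1 - t) *\<^sub>R x + t *\<^sub>R y\<bar> powr p \<le> (1 - t) * \<bar>x\<bar> powr p + t * \<bar>y\<bar> powr p" .
qed auto

lemma powr_inverse_le_of_le_two_powr:
  fixes x y z p :: real
  assumes "x \<ge> 0" "y \<ge> 0" "z \<ge> 0" "p \<ge> 1" "z \<le> 2 powr p * (x + y)"
  shows "z powr (1 / p) \<le> 4 * (x powr (1 / p) + y powr (1 / p))"
proof -
  have "z \<le> 2 powr p * (2 * max x y)"
    using assms(5) by (rule order_trans) (simp add: mult_left_mono)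
  then have "z powr (1 / p) \<le> (2 powr p * (2 * max x y)) powr (1 / p)"
    using assms by (intro powr_mono2) auto
  also have "\<dots> = 2 * 2 powr (1 / p) * max x y powr (1 / p)"
    using assms by (simp add: powr_mult powr_powr)
  also have "\<dots> \<le> 2 * 2 * (x powr (1 / p) + y powr (1 / p))"
  proof (rule mult_mono)
    show "2 * 2 powr (1 / p) \<le> (2 * 2 :: real)"
      using powr_mono[of "1 / p" 1 2] assms by simp
    show "max x y powr (1 / p) \<le> x powr (1 / p) + y powr (1 / p)"
      by (cases "x \<le> y") (auto simp: max_def)
  qed auto
  finally show ?thesis by simp
qed

subsection \<open>The functional \<open>lp_norm\<close>\<close>

lemma lp_norm_eq_powr:
  assumes "(\<integral>\<^sup>+ x. ennreal (\<bar>f x\<bar> powr p) \<partial>M) \<noteq> \<infinity>"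
  shows "lp_norm M p f = ennreal (enn2real (\<integral>\<^sup>+ x. ennreal (\<bar>f x\<bar> powr p) \<partial>M) powr (1 / p))"
  using assms unfolding lp_norm_def Let_def by simp

lemma lp_norm_mono_nn_integral:
  assumes "p > 0"
    and le: "(\<integral>\<^sup>+ x. ennreal (\<bar>f x\<bar> powr p) \<partial>M) \<le> (\<integral>\<^sup>+ x. ennreal (\<bar>g x\<bar> powr p) \<partial>M)"
  shows "lp_norm M p f \<le> lp_norm M p g"
proof (cases "(\<integral>\<^sup>+ x. ennreal (\<bar>g x\<bar> powr p) \<partial>M) = \<infinity>")
  case True
  then show ?thesis by (simp add: lp_norm_def)
next
  case False
  with le have "(\<integral>\<^sup>+ x. ennreal (\<bar>f x\<bar> powr p) \<partial>M) \<noteq> \<infinity>"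
    by (auto simp: top_unique)
  with False show ?thesis
    using assms by (simp add: lp_norm_eq_powr enn2real_mono powr_mono2 ennreal_leI top.not_eq_extremum)
qed

lemma lp_norm_cong_AE:
  assumes "AE x in M. f x = g x"
  shows "lp_norm M p f = lp_norm M p g"
proof -
  have "(\<integral>\<^sup>+ x. ennreal (\<bar>f x\<bar> powr p) \<partial>M) = (\<integral>\<^sup>+ x. ennreal (\<bar>g x\<bar> powr p) \<partial>M)"
    by (rule nn_integral_cong_AE) (use assms in auto)
  then show ?thesis unfolding lp_norm_def by simp
qed

lemma lp_norm_diff_le:
  assumes [measurable]: "f \<in> borel_measurable M" "g \<in> borel_measurable M" and p: "p \<ge> 1"
  shows "lp_norm M p (\<lambda>x. f x - g x) \<le> 4 * (lp_norm M p f + lp_norm M p g)"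
proof -
  define If where "If = (\<integral>\<^sup>+ x. ennreal (\<bar>f x\<bar> powr p) \<partial>M)"
  define Ig where "Ig = (\<integral>\<^sup>+ x. ennreal (\<bar>g x\<bar> powr p) \<partial>M)"
  define Id where "Id = (\<integral>\<^sup>+ x. ennreal (\<bar>f x - g x\<bar> powr p) \<partial>M)"
  have pointwise: "\<bar>a - b\<bar> powr p \<le> 2 powr p * (\<bar>a\<bar> powr p + \<bar>b\<bar> powr p)" for a b :: real
  proof -
    have "\<bar>a - b\<bar> powr p \<le> (2 * max \<bar>a\<bar> \<bar>b\<bar>) powr p"
      by (rule powr_mono2) (use p in auto)
    also have "\<dots> \<le> 2 powr p * (\<bar>a\<bar> powr p + \<bar>b\<bar> powr p)"
      by (auto simp: powr_mult max_def)
    finally show ?thesis .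
  qed
  have "Id \<le> (\<integral>\<^sup>+ x. ennreal (2 powr p) * (ennreal (\<bar>f x\<bar> powr p) + ennreal (\<bar>g x\<bar> powr p)) \<partial>M)"
    unfolding Id_def
    by (rule nn_integral_mono)
       (use pointwise in \<open>auto simp flip: ennreal_plus ennreal_mult intro!: ennreal_leI\<close>)
  also have "\<dots> = ennreal (2 powr p) * (If + Ig)"
    unfolding If_def Ig_def by (simp add: nn_integral_cmult nn_integral_add)
  finally have Id_le: "Id \<le> ennreal (2 powr p) * (If + Ig)" .
  show ?thesis
  proof (cases "If = \<infinity> \<or> Ig = \<infinity>")
    case True
    then show ?thesis by (auto simp: lp_norm_def If_def Ig_def ennreal_mult_top)
  next
    case False
    then have fin: "If \<noteq> \<infinity>" "Ig \<noteq> \<infinity>" by auto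
    then have "ennreal (2 powr p) * (If + Ig) \<noteq> \<infinity>"
      by (simp add: ennreal_mult_eq_top_iff)
    with Id_le have Id_fin: "Id \<noteq> \<infinity>" by (auto simp: top_unique)
    have "enn2real Id \<le> enn2real (ennreal (2 powr p) * (If + Ig))"
      using Id_le fin by (intro enn2real_mono) (auto simp: ennreal_mult_less_top less_top)
    also have "\<dots> = 2 powr p * (enn2real If + enn2real Ig)"
      using fin by (simp add: enn2real_mult enn2real_plus less_top)
    finally have "enn2real Id \<le> 2 powr p * (enn2real If + enn2real Ig)" .
    from powr_inverse_le_of_le_two_powr[OF _ _ _ p this]
    have "ennreal (enn2real Id powr (1 / p))
        \<le> ennreal (4 * (enn2real If powr (1 / p) + enn2real Ig powr (1 / p)))"
      by (intro ennreal_leI) simp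
    then show ?thesis
      using fin Id_fin
      by (simp add: lp_norm_eq_powr ennreal_mult ennreal_plus flip: If_def Ig_def Id_def)
  qed
qed

lemma lp_norm_comp_measure_preserving:
  assumes [measurable]: "S \<in> measurable M M" "f \<in> borel_measurable M"
    and preserving: "distr M M S = M"
  shows "lp_norm M p (\<lambda>x. f (S x)) = lp_norm M p f"
proof -
  have "(\<integral>\<^sup>+ x. ennreal (\<bar>f (S x)\<bar> powr p) \<partial>M) = (\<integral>\<^sup>+ x. ennreal (\<bar>f x\<bar> powr p) \<partial>distr M M S)"
    by (rule nn_integral_distr[symmetric]) auto
  then show ?thesis unfolding lp_norm_def preserving by simp
qed

lemma (in sigma_finite_subalgebra) lp_norm_real_cond_exp_le:
  assumes Z[measurable]: "integrable M Z" and p: "p \<ge> 1"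
  shows "lp_norm M p (real_cond_exp M F Z) \<le> lp_norm M p Z"
proof (rule lp_norm_mono_nn_integral)
  show "(\<integral>\<^sup>+ x. ennreal (\<bar>real_cond_exp M F Z x\<bar> powr p) \<partial>M) \<le> (\<integral>\<^sup>+ x. ennreal (\<bar>Z x\<bar> powr p) \<partial>M)"
  proof (cases "(\<integral>\<^sup>+ x. ennreal (\<bar>Z x\<bar> powr p) \<partial>M) = \<infinity>")
    case False
    then have int: "integrable M (\<lambda>x. \<bar>Z x\<bar> powr p)"
      by (intro integrableI_nonneg) (auto simp: less_top)
    have Jensen: "AE x in M. \<bar>real_cond_exp M F Z x\<bar> powr p \<le> real_cond_exp M F (\<lambda>x. \<bar>Z x\<bar> powr p) x"
      by (rule real_cond_exp_jensens_inequality(2)[where I=UNIV])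
         (use Z int convex_on_abs_powr[OF p] in auto)
    have "(\<integral>\<^sup>+ x. ennreal (\<bar>real_cond_exp M F Z x\<bar> powr p) \<partial>M)
        \<le> (\<integral>\<^sup>+ x. ennreal (real_cond_exp M F (\<lambda>x. \<bar>Z x\<bar> powr p) x) \<partial>M)"
      by (rule nn_integral_mono_AE) (use Jensen in \<open>auto intro: ennreal_leI\<close>)
    also have "\<dots> = ennreal (\<integral> x. real_cond_exp M F (\<lambda>x. \<bar>Z x\<bar> powr p) x \<partial>M)"
      by (rule nn_integral_eq_integral[OF real_cond_exp_int(1)[OF int]]) (auto intro: real_cond_exp_pos)
    also have "\<dots> = (\<integral>\<^sup>+ x. ennreal (\<bar>Z x\<bar> powr p) \<partial>M)"
      by (simp add: real_cond_exp_int(2)[OF int] nn_integral_eq_integral[OF int])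
    finally show ?thesis .
  qed simp
qed (use p in simp)

subsection \<open>Iterates of a measure-preserving map\<close>

lemma funpow_measurable: "T \<in> measurable M M \<Longrightarrow> (T ^^ k) \<in> measurable M M"
  by (induction k) (auto simp: measurable_ident_sets)

lemma distr_funpow_eq:
  assumes T: "T \<in> measurable M M" and preserving: "distr M M T = M"
  shows "distr M M (T ^^ k) = M"
proof (induction k)
  case 0
  then show ?case by (simp add: distr_id2)
next
  case (Suc k)
  have "distr M M (T ^^ Suc k) = distr (distr M M (T ^^ k)) M T"
    using distr_distr[OF T funpow_measurable[OF T, of k]] by simp
  then show ?case using Suc preserving by (simp add: comp_def)
qed

lemma funpow_preimage_sets:
  assumes T: "T \<in> measurable M M" and sub: "subalgebra M F"
    and F_shift: "sets F \<subseteq> {T -` A \<inter> space M | A. A \<in> sets F}"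
    and A: "A \<in> sets F"
  shows "\<exists>B\<in>sets F. A = (T ^^ k) -` B \<inter> space M"
  using A
proof (induction k arbitrary: A)
  case 0
  then have "A \<subseteq> space M"
    using sub by (metis sets.sets_into_space subalgebra_def)
  with 0 show ?case by auto
next
  case (Suc k)
  then obtain B where B: "B \<in> sets F" "A = (T ^^ k) -` B \<inter> space M" by blast
  from F_shift B(1) obtain C where C: "C \<in> sets F" "B = T -` C \<inter> space M" by blast
  have "(T ^^ k) x \<in> space M" if "x \<in> space M" for x
    using funpow_measurable[OF T, of k] that by (auto simp: measurable_def)
  then have "A = (T ^^ Suc k) -` C \<inter> space M"
    using B(2) C(2) by auto
  with C(1) show ?case by blast
qed

lemma integrable_comp_measure_preserving:
  fixes h :: "'a \<Rightarrow> 'b::{banach, second_countable_topology}"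
  assumes [measurable]: "S \<in> measurable M M" and preserving: "distr M M S = M"
    and h: "integrable M h"
  shows "integrable M (\<lambda>x. h (S x))"
proof -
  have [measurable]: "h \<in> borel_measurable M" using h by auto
  have "integrable (distr M M S) h" using h preserving by simp
  then show ?thesis using integrable_distr_eq[of S M M h] by simp
qed

lemma set_integral_comp_measure_preserving:
  fixes h :: "'a \<Rightarrow> real"
  assumes [measurable]: "S \<in> measurable M M" "h \<in> borel_measurable M" "B \<in> sets M"
    and preserving: "distr M M S = M"
  shows "(\<integral>x\<in>S -` B \<inter> space M. h (S x) \<partial>M) = (\<integral>x\<in>B. h x \<partial>M)"
proof -
  have "(\<integral>x\<in>S -` B \<inter> space M. h (S x) \<partial>M) = (\<integral>x. indicator B (S x) * h (S x) \<partial>M)"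
    unfolding set_lebesgue_integral_def
    by (rule Bochner_Integration.integral_cong) (auto simp: indicator_def)
  also have "\<dots> = (\<integral>x. indicator B x * h x \<partial>distr M M S)"
    by (rule integral_distr[symmetric]) auto
  finally show ?thesis
    unfolding preserving set_lebesgue_integral_def by simp
qed

lemma (in sigma_finite_subalgebra) real_cond_exp_comp_measure_preserving:
  assumes S[measurable]: "S \<in> measurable M M" and preserving: "distr M M S = M"
    and F_preimage: "\<And>A. A \<in> sets F \<Longrightarrow> \<exists>B\<in>sets F. A = S -` B \<inter> space M"
    and Y: "integrable M Y"
  shows "AE x in M. real_cond_exp M F (\<lambda>x. Y (S x)) x
                  = real_cond_exp M F (\<lambda>x. real_cond_exp M F Y (S x)) x"
proof -
  have EY: "integrable M (real_cond_exp M F Y)" by (rule real_cond_exp_int(1)[OF Y])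
  show ?thesis
  proof (rule real_cond_exp_charact)
    fix A assume A: "A \<in> sets F"
    obtain B where B: "B \<in> sets F" "A = S -` B \<inter> space M"
      using F_preimage[OF A] by blast
    have [measurable]: "B \<in> sets M" "Y \<in> borel_measurable M"
      using B(1) subalg Y by (auto simp: subalgebra_def)
    have "(\<integral>x\<in>A. Y (S x) \<partial>M) = (\<integral>x\<in>B. Y x \<partial>M)"
      unfolding B(2) by (rule set_integral_comp_measure_preserving[OF S _ _ preserving]) auto
    also have "\<dots> = (\<integral>x\<in>B. real_cond_exp M F Y x \<partial>M)"
      by (rule real_cond_exp_intA[OF Y B(1)])
    also have "\<dots> = (\<integral>x\<in>A. real_cond_exp M F Y (S x) \<partial>M)"
      unfolding B(2) by (rule set_integral_comp_measure_preserving[OF S _ _ preserving, symmetric]) auto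
    also have "\<dots> = (\<integral>x\<in>A. real_cond_exp M F (\<lambda>x. real_cond_exp M F Y (S x)) x \<partial>M)"
      by (rule real_cond_exp_intA[OF integrable_comp_measure_preserving[OF S preserving EY] A])
    finally show "(\<integral>x\<in>A. Y (S x) \<partial>M) = (\<integral>x\<in>A. real_cond_exp M F (\<lambda>x. real_cond_exp M F Y (S x)) x \<partial>M)" .
  next
    show "integrable M (\<lambda>x. Y (S x))"
      by (rule integrable_comp_measure_preserving[OF S preserving Y])
  next
    show "integrable M (real_cond_exp M F (\<lambda>x. real_cond_exp M F Y (S x)))"
      by (rule real_cond_exp_int(1)[OF integrable_comp_measure_preserving[OF S preserving EY]])
  qed simp
qed

subsection \<open>Partial sums\<close>

lemma partial_sum_add:
  "partial_sum T X0 (k + j) x = partial_sum T X0 k x + partial_sum T X0 j ((T ^^ k) x)"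
proof (induction j)
  case 0
  then show ?case by (simp add: partial_sum_def)
next
  case (Suc j)
  have "(T ^^ (k + j)) x = (T ^^ j) ((T ^^ k) x)" by (simp add: funpow_add add.commute)
  with Suc show ?case by (simp add: partial_sum_def)
qed

lemma integrable_partial_sum:
  assumes T: "T \<in> measurable M M" and preserving: "distr M M T = M" and X: "integrable M X0"
  shows "integrable M (partial_sum T X0 m)"
  unfolding partial_sum_def
  using integrable_comp_measure_preserving[OF funpow_measurable[OF T] distr_funpow_eq[OF T preserving] X]
  by auto

lemma (in sigma_finite_subalgebra) lp_norm_cond_exp_partial_sum_quasi_subadditive:
  assumes T: "T \<in> measurable M M" and preserving: "distr M M T = M"
    and F_shift: "sets F \<subseteq> {T -` A \<inter> space M | A. A \<in> sets F}"
    and X: "integrable M X0" and p: "p \<ge> 1"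
  shows "lp_norm M p (real_cond_exp M F (partial_sum T X0 k))
     \<le> 4 * (lp_norm M p (real_cond_exp M F (partial_sum T X0 (k + j)))
            + lp_norm M p (real_cond_exp M F (partial_sum T X0 j)))"
proof -
  define S where "S = T ^^ k"
  have S[measurable]: "S \<in> measurable M M" unfolding S_def by (rule funpow_measurable[OF T])
  have S_preserving: "distr M M S = M" unfolding S_def by (rule distr_funpow_eq[OF T preserving])
  define E where "E = (\<lambda>m. real_cond_exp M F (partial_sum T X0 m))"
  define R where "R = (\<lambda>x. partial_sum T X0 j (S x))"
  have int_j: "integrable M (partial_sum T X0 j)"
    by (rule integrable_partial_sum[OF T preserving X])
  have int_kj: "integrable M (partial_sum T X0 (k + j))"
    by (rule integrable_partial_sum[OF T preserving X])
  have int_R: "integrable M R"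
    unfolding R_def by (rule integrable_comp_measure_preserving[OF S S_preserving int_j])
  have "partial_sum T X0 k = (\<lambda>x. partial_sum T X0 (k + j) x - R x)"
    unfolding R_def S_def by (simp add: partial_sum_add)
  then have "AE x in M. E k x = E (k + j) x - real_cond_exp M F R x"
    unfolding E_def using real_cond_exp_diff[OF int_kj int_R] by simp
  then have "lp_norm M p (E k) = lp_norm M p (\<lambda>x. E (k + j) x - real_cond_exp M F R x)"
    by (rule lp_norm_cong_AE)
  also have "\<dots> \<le> 4 * (lp_norm M p (E (k + j)) + lp_norm M p (real_cond_exp M F R))"
    unfolding E_def by (rule lp_norm_diff_le[OF _ _ p]) auto
  also have "lp_norm M p (real_cond_exp M F R) = lp_norm M p (real_cond_exp M F (\<lambda>x. E j (S x)))"
    unfolding R_def E_def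
    by (rule lp_norm_cong_AE[OF real_cond_exp_comp_measure_preserving[OF S S_preserving _ int_j]])
       (use funpow_preimage_sets[OF T subalg F_shift] in \<open>simp add: S_def\<close>)
  also have "\<dots> \<le> lp_norm M p (\<lambda>x. E j (S x))"
    unfolding E_def
    by (rule lp_norm_real_cond_exp_le[OF integrable_comp_measure_preserving[OF S S_preserving] p])
       (rule real_cond_exp_int(1)[OF int_j])
  also have "\<dots> = lp_norm M p (E j)"
    unfolding E_def by (rule lp_norm_comp_measure_preserving[OF S _ S_preserving]) simp
  finally show ?thesis
    unfolding E_def by (simp add: mult_left_mono add_left_mono)
qed

subsection \<open>A deterministic inequality\<close>

lemma Max_le_weighted_tail_sum_of_quasi_subadditive:
  fixes a :: "nat \<Rightarrow> ennreal" and C :: ennreal and \<gamma> :: real and n :: nat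
  assumes quasi_subadditive: "\<And>k j. a k \<le> C * (a (k + j) + a j)"
    and \<gamma>: "\<gamma> \<ge> -1" and n: "n \<ge> 1"
  shows "ennreal (1 / real n powr \<gamma>) * (MAX k\<in>{1..n}. a k)
     \<le> C * ennreal (4 powr (\<gamma> + 1)) *
        (\<Sum>k. ennreal (1 / real (k + n + 1) powr (\<gamma> + 1)) * a (k + n + 1))"
proof -
  define w where "w = (\<lambda>i::nat. ennreal (1 / real i powr (\<gamma> + 1)))"
  define block where "block = (\<Sum>i\<in>{n+1..4*n}. a i)"
  obtain k0 where k0: "k0 \<in> {1..n}" "(MAX k\<in>{1..n}. a k) = a k0"
  proof -
    have "(MAX k\<in>{1..n}. a k) \<in> a ` {1..n}" by (rule Max_in) (use n in auto)
    then show ?thesis using that by auto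
  qed
  have "of_nat (2 * n) * a k0 = (\<Sum>j\<in>{n+1..3*n}. a k0)"
    by simp
  also have "\<dots> \<le> (\<Sum>j\<in>{n+1..3*n}. C * (a (k0 + j) + a j))"
    by (rule sum_mono) (rule quasi_subadditive)
  also have "\<dots> = C * ((\<Sum>j\<in>{n+1..3*n}. a (k0 + j)) + (\<Sum>j\<in>{n+1..3*n}. a j))"
    by (simp add: sum_distrib_left sum.distrib distrib_left)
  also have "\<dots> \<le> C * (block + block)"
  proof (intro mult_left_mono add_mono)
    have "(\<Sum>j\<in>{n+1..3*n}. a (k0 + j)) = sum a ((+) k0 ` {n+1..3*n})"
      using sum.reindex[of "(+) k0" "{n+1..3*n}" a] by (simp only: inj_on_add comp_def)
    also have "\<dots> \<le> block"
      unfolding block_def by (rule sum_mono2) (use k0 in auto)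
    finally show "(\<Sum>j\<in>{n+1..3*n}. a (k0 + j)) \<le> block" .
    show "(\<Sum>j\<in>{n+1..3*n}. a j) \<le> block"
      unfolding block_def by (rule sum_mono2) auto
  qed auto
  also have "\<dots> = 2 * C * block"
    by (simp add: mult_2 distrib_left distrib_right)
  finally have average: "of_nat (2 * n) * a k0 \<le> 2 * C * block" .
  have rn: "real n > 0" using n by simp
  define r where "r = 1 / (real n powr \<gamma> * (2 * real n))"
  have r_twice: "2 * ennreal r = ennreal (1 / real n powr (\<gamma> + 1))"
    using rn by (simp add: r_def numeral_mult_ennreal powr_add)
  have "ennreal r * of_nat (2 * n) = ennreal (1 / real n powr \<gamma>)"
    using rn by (simp add: r_def ennreal_of_nat_eq_real_of_nat flip: ennreal_mult)
  then have "ennreal (1 / real n powr \<gamma>) * a k0 = ennreal r * (of_nat (2 * n) * a k0)"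
    by (simp add: mult.assoc[symmetric])
  also have "\<dots> \<le> ennreal r * (2 * C * block)"
    by (rule mult_left_mono[OF average]) simp
  also have "\<dots> = C * ((2 * ennreal r) * block)"
    by (simp add: ac_simps)
  also have "\<dots> = C * (\<Sum>i\<in>{n+1..4*n}. ennreal (1 / real n powr (\<gamma> + 1)) * a i)"
    by (simp add: r_twice block_def sum_distrib_left)
  also have "\<dots> \<le> C * (\<Sum>i\<in>{n+1..4*n}. ennreal (4 powr (\<gamma> + 1)) * (w i * a i))"
  proof (intro mult_left_mono sum_mono)
    fix i assume i: "i \<in> {n+1..4*n}"
    have "real i powr (\<gamma> + 1) \<le> (4 * real n) powr (\<gamma> + 1)"
      using i \<gamma> by (intro powr_mono2) auto
    then have "1 / real n powr (\<gamma> + 1) \<le> 4 powr (\<gamma> + 1) * (1 / real i powr (\<gamma> + 1))"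
      using i rn by (simp add: powr_mult field_simps)
    then have "ennreal (1 / real n powr (\<gamma> + 1)) \<le> ennreal (4 powr (\<gamma> + 1)) * w i"
      unfolding w_def by (simp add: ennreal_leI flip: ennreal_mult)
    then show "ennreal (1 / real n powr (\<gamma> + 1)) * a i \<le> ennreal (4 powr (\<gamma> + 1)) * (w i * a i)"
      unfolding mult.assoc[symmetric] by (rule mult_right_mono) simp
  qed simp
  also have "\<dots> = C * ennreal (4 powr (\<gamma> + 1)) * (\<Sum>k<3*n. w (k + n + 1) * a (k + n + 1))"
  proof -
    have "{n+1..4*n} = (\<lambda>k. k + n + 1) ` {..<3*n}"
    proof (rule set_eqI, rule iffI)
      fix i assume "i \<in> {n+1..4*n}"
      then show "i \<in> (\<lambda>k. k + n + 1) ` {..<3*n}" by (intro image_eqI[of _ _ "i - n - 1"]) auto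
    qed auto
    then show ?thesis by (simp add: sum_distrib_left sum.reindex inj_on_def mult.assoc)
  qed
  also have "\<dots> \<le> C * ennreal (4 powr (\<gamma> + 1)) * (\<Sum>k. w (k + n + 1) * a (k + n + 1))"
    by (intro mult_left_mono sum_le_suminf) auto
  finally show ?thesis unfolding k0(2) w_def .
qed

lemma four_mul_four_powr_le:
  fixes \<gamma> :: real
  assumes "\<gamma> \<ge> 0"
  shows "4 * 4 powr (\<gamma> + 1) \<le> 3 * 2 powr (2 * \<gamma> + 1) * (2 powr (\<gamma> + 1) + 1)"
proof -
  have "(4::real) powr (\<gamma> + 1) = 2 * 2 powr (2 * \<gamma> + 1)"
    using powr_powr[of 2 2 "\<gamma> + 1"] by (simp add: powr_add algebra_simps)
  moreover have "(2::real) \<le> 2 powr (\<gamma> + 1)"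
    using powr_mono[of 1 "\<gamma> + 1" 2] assms by simp
  ultimately show ?thesis by (simp add: algebra_simps)
qed

theorem mainTheorem16:
  fixes M F0 :: "'a measure" and T :: "'a \<Rightarrow> 'a" and X0 :: "'a \<Rightarrow> real"
    and \<gamma> p :: real and n :: nat
  assumes "prob_space M"
    and "bij_betw T (space M) (space M)"
    and "T \<in> measurable M M"
    and "the_inv_into (space M) T \<in> measurable M M"
    and "distr M M T = M"
    and "subalgebra M F0"
    and "sets F0 \<subseteq> {T -` A \<inter> space M | A. A \<in> sets F0}"
    and "X0 \<in> borel_measurable F0"
    and "integral\<^sup>L M X0 = 0"
    and "integrable M (\<lambda>x. (X0 x)\<^sup>2)"
    and "\<gamma> > 0" and "n \<ge> 1" and "p \<ge> 1"
  shows "ennreal (1 / real n powr \<gamma>) *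
           (MAX k\<in>{1..n}. lp_norm M p (real_cond_exp M F0 (partial_sum T X0 k)))
         \<le> ennreal (3 * 2 powr (2 * \<gamma> + 1) * (2 powr (\<gamma> + 1) + 1)) *
           (\<Sum>k. ennreal (1 / real (k + n + 1) powr (\<gamma> + 1)) *
                 lp_norm M p (real_cond_exp M F0 (partial_sum T X0 (k + n + 1))))"
proof -
  interpret prob_space M by fact
  interpret finite_measure_subalgebra M F0 by standard fact
  have "X0 \<in> borel_measurable M"
    using measurable_from_subalg assms(6,8) by blast
  then have "integrable M X0"
    using square_integrable_imp_integrable assms(10) by blast
  then have "lp_norm M p (real_cond_exp M F0 (partial_sum T X0 k))
      \<le> 4 * (lp_norm M p (real_cond_exp M F0 (partial_sum T X0 (k + j)))
               + lp_norm M p (real_cond_exp M F0 (partial_sum T X0 j)))" for k j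
    using lp_norm_cond_exp_partial_sum_quasi_subadditive assms(3,5,7,13) by simp
  from Max_le_weighted_tail_sum_of_quasi_subadditive[OF this] assms(11,12)
  have "ennreal (1 / real n powr \<gamma>) *
           (MAX k\<in>{1..n}. lp_norm M p (real_cond_exp M F0 (partial_sum T X0 k)))
         \<le> ennreal (4 * 4 powr (\<gamma> + 1)) *
           (\<Sum>k. ennreal (1 / real (k + n + 1) powr (\<gamma> + 1)) *
                 lp_norm M p (real_cond_exp M F0 (partial_sum T X0 (k + n + 1))))"
    by (simp add: numeral_mult_ennreal)
  also have "\<dots> \<le> ennreal (3 * 2 powr (2 * \<gamma> + 1) * (2 powr (\<gamma> + 1) + 1)) *
           (\<Sum>k. ennreal (1 / real (k + n + 1) powr (\<gamma> + 1)) *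
                 lp_norm M p (real_cond_exp M F0 (partial_sum T X0 (k + n + 1))))"
    using four_mul_four_powr_le assms(11) by (intro mult_right_mono ennreal_leI) auto
  finally show ?thesis .
qed

end
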